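(* Let $u\geq 1$ and $r\geq 2$ be integers. For every non-negative integer $n$, $\alpha_u^{(r)}(n)=\beta_u^{(r)}(n)$.
   Context: A partition of $n$ is a non-increasing finite sequence of positive integers (parts) summing to $n$. $\mathcal O(n;r,1)$ denotes the set of partitions of $n$ in which exactly one distinct part value is divisible by $r$ (this part may be repeated). $\mathcal O_u(n;r,1)$ is the set of $\lambda\in\mathcal O(n;r,1)$ such that the unique part value divisible by $r$ occurs exactly $u$ times. $\mathcal D(n;r,1)$ denotes the set of partitions of $n$ in which exactly one part value occurs at least $r$ times. $\mathcal D_u(n;r,1)$ is the set of $\lambda\in\mathcal D(n;r,1)$ such that the unique part value occurring at least $r$ times equals $u$. Set $\alpha_u^{(r)}(n)=|\mathcal O_u(n;r,1)|$ and $\beta_u^{(r)}(n)=|\mathcal D_u(n;r,1)|$. *)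

theory Defs
  imports Main "HOL-Library.Multiset"
begin

definition partitions :: "nat \<Rightarrow> nat multiset set" where
  "partitions n = {p. (\<forall>x\<in>#p. 0 < x) \<and> sum_mset p = n}"

definition O_set :: "nat \<Rightarrow> nat \<Rightarrow> nat \<Rightarrow> nat multiset set" where
  "O_set u r n = {p \<in> partitions n.
      \<exists>v. {x \<in> set_mset p. r dvd x} = {v} \<and> count p v = u}"

definition D_set :: "nat \<Rightarrow> nat \<Rightarrow> nat \<Rightarrow> nat multiset set" where
  "D_set u r n = {p \<in> partitions n. {x \<in> set_mset p. r \<le> count p x} = {u}}"

definition alpha :: "nat \<Rightarrow> nat \<Rightarrow> nat \<Rightarrow> nat" where
  "alpha u r n = card (O_set u r n)"

definition beta :: "nat \<Rightarrow> nat \<Rightarrow> nat \<Rightarrow> nat" where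
  "beta u r n = card (D_set u r n)"

end

theory Submission
  imports Defs
begin

text \<open>Deleting the u copies of the unique part value r k divisible by r maps O_u(n;r,1)
bijectively onto the pairs (k, a) with k \<ge> 1 and a a partition of n - u r k without parts
divisible by r. Deleting r k copies of u, where r k is the largest multiple of r not exceeding the
multiplicity of u, maps D_u(n;r,1) onto the pairs with a a partition of n - u r k all of whose
multiplicities are below r. The two counts therefore agree termwise by Glaisher's theorem, which
follows by cancelling the partition numbers from two decompositions p(n) = \<Sum>j c(n - r j) p(j):
a partition splits uniquely into its parts not divisible by r plus r times a partition of j, and
into its multiplicities taken mod r plus r copies of a partition of j.\<close>

lemma size_le_sum_mset_pos:
  fixes p :: "nat multiset"
  assumes "\<forall>x\<in>#p. 0 < x"
  shows "size p \<le> sum_mset p"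
  using assms by (induction p) auto

lemma finite_partitions: "finite (partitions n)"
proof (rule finite_subset)
  show "partitions n \<subseteq> (\<Union>m\<le>n. multisets_of_size {1..n} m)"
  proof
    fix p assume "p \<in> partitions n"
    then have pos: "\<forall>x\<in>#p. 0 < x" and sum: "sum_mset p = n"
      by (auto simp: partitions_def)
    have "set_mset p \<subseteq> {1..n}"
      using pos sum by (auto dest!: multi_member_split)
    moreover have "size p \<le> n"
      using size_le_sum_mset_pos[OF pos] sum by simp
    ultimately show "p \<in> (\<Union>m\<le>n. multisets_of_size {1..n} m)"
      by (auto simp: multisets_of_size_def)
  qed
qed auto

lemma partitions_0 [simp]: "partitions 0 = {{#}}"
  by (auto simp: partitions_def) (metis multiset_nonemptyE gr_implies_not0)

lemma finite_mult_le [simp]: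
  assumes "0 < r"
  shows "finite {j::nat. r * j \<le> n}"
proof (rule finite_subset)
  show "{j. r * j \<le> n} \<subseteq> {..n}"
    using assms by (auto intro: order_trans[rotated] simp: Suc_le_eq)
qed simp

lemma convolution_cancel:
  fixes f g h :: "nat \<Rightarrow> nat"
  assumes "0 < r" and "g 0 = 1"
    and conv: "\<And>m. (\<Sum>j | r * j \<le> m. f (m - r * j) * g j) = (\<Sum>j | r * j \<le> m. h (m - r * j) * g j)"
  shows "f n = h n"
proof (induction n rule: less_induct)
  case (less n)
  let ?J = "{j. r * j \<le> n}"
  have lower: "(\<Sum>j\<in>?J - {0}. f (n - r * j) * g j) = (\<Sum>j\<in>?J - {0}. h (n - r * j) * g j)"
  proof (rule sum.cong)
    fix j assume "j \<in> ?J - {0}"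
    then have "0 < r * j" and "r * j \<le> n"
      using \<open>0 < r\<close> by auto
    then have "n - r * j < n"
      by linarith
    then show "f (n - r * j) * g j = h (n - r * j) * g j"
      by (simp add: less.IH)
  qed simp
  have "finite ?J" and "0 \<in> ?J"
    using \<open>0 < r\<close> by simp_all
  note split_0 = sum.remove[OF this]
  show ?case
    using conv[of n] lower \<open>g 0 = 1\<close>
    unfolding split_0[of "\<lambda>j. f (n - r * j) * g j"] split_0[of "\<lambda>j. h (n - r * j) * g j"] by simp
qed

lemma card_Sigma_convolution:
  assumes "0 < r" and "\<And>m. finite (A m)"
  shows "card (SIGMA j:{j. r * j \<le> n}. A (n - r * j) \<times> partitions j)
    = (\<Sum>j | r * j \<le> n. card (A (n - r * j)) * card (partitions j))"
  using assms by (simp add: card_cartesian_product finite_partitions)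

definition indivisible_partitions :: "nat \<Rightarrow> nat \<Rightarrow> nat multiset set" where
  "indivisible_partitions r n = {p \<in> partitions n. \<forall>x\<in>#p. \<not> r dvd x}"

lemma finite_indivisible_partitions [simp]: "finite (indivisible_partitions r n)"
  unfolding indivisible_partitions_def using finite_partitions by simp

lemma sum_mset_image_mult: "sum_mset (image_mset ((*) r) q) = r * sum_mset (q :: nat multiset)"
  by (induction q) (simp_all add: algebra_simps)

lemma filter_mset_add_separated:
  assumes "\<forall>x\<in>#a. \<not> P x" and "\<forall>x\<in>#b. P x"
  shows "filter_mset P (a + b) = b" and "filter_mset (\<lambda>x. \<not> P x) (a + b) = a"
  using assms by (auto simp: multiset_eq_iff not_in_iff)

lemma image_div_image_mult:
  "0 < r \<Longrightarrow> image_mset (\<lambda>x. x div r) (image_mset ((*) r) q) = (q :: nat multiset)"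
  by (induction q) simp_all

lemma image_mult_image_div:
  "image_mset ((*) r) (image_mset (\<lambda>x. x div r) (filter_mset ((dvd) r) p)) = filter_mset ((dvd) r) (p :: nat multiset)"
  by (induction p) simp_all

lemma card_partitions_split_multiples:
  assumes "0 < r"
  shows "card (partitions n)
    = (\<Sum>j | r * j \<le> n. card (indivisible_partitions r (n - r * j)) * card (partitions j))"
proof -
  let ?S = "SIGMA j:{j. r * j \<le> n}. indivisible_partitions r (n - r * j) \<times> partitions j"
  define join where "join = (\<lambda>(j::nat, a, q). a + image_mset ((*) r) q)"
  define quot where "quot p = image_mset (\<lambda>x. x div r) (filter_mset ((dvd) r) p)" for p
  define split where "split p = (sum_mset (quot p), filter_mset (\<lambda>x. \<not> r dvd x) p, quot p)" for p
  have split_join: "split (join s) = s" if "s \<in> ?S" for s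
  proof -
    obtain j a q where s: "s = (j, a, q)" and "\<forall>x\<in>#a. \<not> r dvd x" and "sum_mset q = j"
      using \<open>s \<in> ?S\<close> by (auto simp: indivisible_partitions_def partitions_def)
    then show ?thesis
      by (simp add: join_def split_def quot_def filter_mset_add_separated
          image_div_image_mult[OF assms] del: filter_union_mset)
  qed
  have join_split: "join (split p) = p" for p
    by (simp add: join_def split_def quot_def image_mult_image_div)
  have quot_pos: "\<forall>x\<in>#quot p. 0 < x" if "\<forall>x\<in>#p. 0 < x" for p
    using that assms by (auto simp: quot_def elim!: dvdE)
  have "join ` ?S \<subseteq> partitions n"
    using assms by (auto simp: join_def indivisible_partitions_def partitions_def sum_mset_image_mult)
  moreover have "split ` partitions n \<subseteq> ?S"
  proof (rule image_subsetI)
    fix p assume "p \<in> partitions n"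
    then have "sum_mset (join (split p)) = n"
      by (simp add: join_split partitions_def)
    then have "sum_mset (filter_mset (\<lambda>x. \<not> r dvd x) p) + r * sum_mset (quot p) = n"
      by (simp add: join_def split_def sum_mset_image_mult)
    then show "split p \<in> ?S"
      using \<open>p \<in> partitions n\<close> quot_pos
      by (auto simp: split_def indivisible_partitions_def partitions_def)
  qed
  ultimately have "bij_betw join ?S (partitions n)"
    by (intro bij_betw_byWitness[where f' = split]) (simp_all add: split_join join_split)
  then have "card ?S = card (partitions n)"
    by (rule bij_betw_same_card)
  then show ?thesis
    using card_Sigma_convolution[where A = "indivisible_partitions r", OF assms] by simp
qed

definition mult_bounded_partitions :: "nat \<Rightarrow> nat \<Rightarrow> nat multiset set" where
  "mult_bounded_partitions r n = {p \<in> partitions n. \<forall>x. count p x < r}"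

lemma finite_mult_bounded_partitions [simp]: "finite (mult_bounded_partitions r n)"
  unfolding mult_bounded_partitions_def using finite_partitions by simp

definition mset_div :: "nat \<Rightarrow> 'a multiset \<Rightarrow> 'a multiset" where
  "mset_div r p = (\<Sum>x\<in>set_mset p. replicate_mset (count p x div r) x)"

definition mset_mod :: "nat \<Rightarrow> 'a multiset \<Rightarrow> 'a multiset" where
  "mset_mod r p = p - repeat_mset r (mset_div r p)"

lemma count_mset_div [simp]: "count (mset_div r p) x = count p x div r"
proof -
  have "count (mset_div r p) x = (\<Sum>y\<in>set_mset p. if x = y then count p y div r else 0)"
    unfolding mset_div_def count_sum by (intro sum.cong) auto
  then show ?thesis
    by (simp add: not_in_iff)
qed

lemma count_mset_mod [simp]: "count (mset_mod r p) x = count p x mod r"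
  by (simp add: mset_mod_def minus_mult_div_eq_mod)

lemma mset_mod_add_repeat_mset_div: "mset_mod r p + repeat_mset r (mset_div r p) = p"
  by (simp add: multiset_eq_iff)

lemma set_mset_mset_div_subset: "set_mset (mset_div r p) \<subseteq> set_mset p"
  by (rule subsetI) (metis count_mset_div count_eq_zero_iff div_0)

lemma
  assumes "\<And>x. count a x < r"
  shows mset_div_add_repeat_mset: "mset_div r (a + repeat_mset r q) = q"
    and mset_mod_add_repeat_mset: "mset_mod r (a + repeat_mset r q) = a"
proof -
  have "0 < r"
    using assms[of undefined] by simp
  then have "(count a x + r * count q x) div r = count q x" for x
    using assms[of x] by simp
  then show "mset_div r (a + repeat_mset r q) = q" and "mset_mod r (a + repeat_mset r q) = a"
    using assms by (simp_all add: multiset_eq_iff)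
qed

lemma sum_mset_repeat_mset: "sum_mset (repeat_mset r q) = r * sum_mset (q :: nat multiset)"
  by (induction r) simp_all

lemma in_repeat_mset_iff: "x \<in># repeat_mset r q \<longleftrightarrow> 0 < r \<and> x \<in># q"
  by (metis count_repeat_mset count_greater_zero_iff nat_0_less_mult_iff)

lemma card_partitions_split_repetitions:
  assumes "0 < r"
  shows "card (partitions n)
    = (\<Sum>j | r * j \<le> n. card (mult_bounded_partitions r (n - r * j)) * card (partitions j))"
proof -
  let ?S = "SIGMA j:{j. r * j \<le> n}. mult_bounded_partitions r (n - r * j) \<times> partitions j"
  define join where "join = (\<lambda>(j::nat, a, q :: nat multiset). a + repeat_mset r q)"
  define split where "split p = (sum_mset (mset_div r p), mset_mod r p, mset_div r p)" for p :: "nat multiset"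
  have split_join: "split (join s) = s" if "s \<in> ?S" for s
  proof -
    obtain j a q where s: "s = (j, a, q)" and "\<And>x. count a x < r" and "sum_mset q = j"
      using \<open>s \<in> ?S\<close> by (auto simp: mult_bounded_partitions_def partitions_def)
    then show ?thesis
      by (simp add: join_def split_def mset_div_add_repeat_mset mset_mod_add_repeat_mset)
  qed
  have join_split: "join (split p) = p" for p
    by (simp add: join_def split_def mset_mod_add_repeat_mset_div)
  have "join ` ?S \<subseteq> partitions n"
    by (auto simp: join_def mult_bounded_partitions_def partitions_def sum_mset_repeat_mset in_repeat_mset_iff)
  moreover have "split ` partitions n \<subseteq> ?S"
  proof (rule image_subsetI)
    fix p assume "p \<in> partitions n"
    then have "sum_mset (join (split p)) = n"
      by (simp add: join_split partitions_def)
    then have "sum_mset (mset_mod r p) + r * sum_mset (mset_div r p) = n"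
      by (simp add: join_def split_def sum_mset_repeat_mset)
    moreover have "set_mset (mset_mod r p) \<subseteq> set_mset p"
      by (simp add: mset_mod_def in_diffD subsetI)
    ultimately show "split p \<in> ?S"
      using \<open>p \<in> partitions n\<close> assms set_mset_mset_div_subset[of r p]
      by (auto simp: split_def mult_bounded_partitions_def partitions_def)
  qed
  ultimately have "bij_betw join ?S (partitions n)"
    by (intro bij_betw_byWitness[where f' = split]) (simp_all add: split_join join_split)
  then have "card ?S = card (partitions n)"
    by (rule bij_betw_same_card)
  then show ?thesis
    using card_Sigma_convolution[where A = "mult_bounded_partitions r", OF assms] by simp
qed

theorem card_indivisible_partitions_eq_mult_bounded:
  assumes "0 < r"
  shows "card (indivisible_partitions r n) = card (mult_bounded_partitions r n)"
proof (rule convolution_cancel[where f = "\<lambda>m. card (indivisible_partitions r m)"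
      and h = "\<lambda>m. card (mult_bounded_partitions r m)" and g = "\<lambda>j. card (partitions j)"])
  show "(\<Sum>j | r * j \<le> m. card (indivisible_partitions r (m - r * j)) * card (partitions j))
      = (\<Sum>j | r * j \<le> m. card (mult_bounded_partitions r (m - r * j)) * card (partitions j))" for m
    using card_partitions_split_multiples[OF assms, of m] card_partitions_split_repetitions[OF assms, of m]
    by (rule trans[OF sym])
qed (simp_all add: assms)

lemma filter_mset_eq_replicate_mset:
  assumes "{x \<in> set_mset p. P x} = {v}"
  shows "filter_mset P p = replicate_mset (count p v) v"
proof (rule multiset_eqI)
  fix x
  have "P v"
    using assms by blast
  moreover have "count p x = 0" if "P x" and "x \<noteq> v"
    using assms that by (metis (mono_tags) count_eq_zero_iff mem_Collect_eq singletonD)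
  ultimately show "count (filter_mset P p) x = count (replicate_mset (count p v) v) x"
    by auto
qed

lemma O_set_multiples:
  assumes "p \<in> O_set u r n"
  shows "\<exists>k>0. filter_mset ((dvd) r) p = replicate_mset u (r * k)"
proof -
  obtain v where v: "{x \<in> set_mset p. r dvd x} = {v}" and "count p v = u" and "p \<in> partitions n"
    using assms by (auto simp: O_set_def)
  moreover obtain k where "v = r * k"
    using v by blast
  moreover have "0 < v"
    using v \<open>p \<in> partitions n\<close> by (auto simp: partitions_def)
  ultimately show ?thesis
    using filter_mset_eq_replicate_mset[OF v] by auto
qed

lemma add_replicate_mset_in_O_set:
  assumes "0 < u" and "0 < r" and "0 < k" and "u * r * k \<le> n"
    and a: "a \<in> indivisible_partitions r (n - u * r * k)"
  shows "a + replicate_mset u (r * k) \<in> O_set u r n"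
proof -
  have "\<forall>x\<in>#a. 0 < x" and "sum_mset a = n - u * r * k" and a_indiv: "\<forall>x\<in>#a. \<not> r dvd x"
    using a by (auto simp: indivisible_partitions_def partitions_def)
  then have "a + replicate_mset u (r * k) \<in> partitions n"
    using assms by (auto simp: partitions_def algebra_simps)
  moreover have "{x \<in> set_mset (a + replicate_mset u (r * k)). r dvd x} = {r * k}"
    using a_indiv assms by auto
  moreover have "count (a + replicate_mset u (r * k)) (r * k) = u"
    using a_indiv by (auto simp: not_in_iff[symmetric])
  ultimately show ?thesis
    by (auto simp: O_set_def)
qed

lemma alpha_eq_sum:
  assumes "0 < u" and "0 < r"
  shows "alpha u r n = (\<Sum>k | 0 < k \<and> u * r * k \<le> n. card (indivisible_partitions r (n - u * r * k)))"
proof -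
  let ?K = "{k. 0 < k \<and> u * r * k \<le> n}"
  let ?S = "SIGMA k:?K. indivisible_partitions r (n - u * r * k)"
  define join where "join = (\<lambda>(k, a). a + replicate_mset u (r * k))"
  define split where
    "split p = (sum_mset (filter_mset ((dvd) r) p) div (u * r), filter_mset (\<lambda>x. \<not> r dvd x) p)" for p
  have split_join: "split (join s) = s" if "s \<in> ?S" for s
  proof -
    obtain k a where s: "s = (k, a)" and "\<forall>x\<in>#a. \<not> r dvd x"
      using \<open>s \<in> ?S\<close> by (auto simp: indivisible_partitions_def)
    then show ?thesis
      using assms by (simp add: join_def split_def filter_mset_add_separated del: filter_union_mset)
  qed
  have split_eq: "split p = (k, filter_mset (\<lambda>x. \<not> r dvd x) p)"
    if "filter_mset ((dvd) r) p = replicate_mset u (r * k)" for p k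
    using that assms by (simp add: split_def)
  have join_split: "join (split p) = p" if p: "p \<in> O_set u r n" for p
  proof -
    obtain k where "filter_mset ((dvd) r) p = replicate_mset u (r * k)"
      using O_set_multiples[OF p] by blast
    then show ?thesis
      using multiset_partition[of p "(dvd) r"] by (simp add: split_eq join_def add.commute)
  qed
  have "join ` ?S \<subseteq> O_set u r n"
    using assms by (auto simp: join_def intro: add_replicate_mset_in_O_set)
  moreover have "split ` O_set u r n \<subseteq> ?S"
  proof (rule image_subsetI)
    fix p assume "p \<in> O_set u r n"
    then obtain k where "0 < k" and filt: "filter_mset ((dvd) r) p = replicate_mset u (r * k)"
      using O_set_multiples by blast
    have p_eq: "p = filter_mset (\<lambda>x. \<not> r dvd x) p + replicate_mset u (r * k)"
      using multiset_partition[of p "(dvd) r"] filt by (simp add: add.commute)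
    have "sum_mset p = sum_mset (filter_mset (\<lambda>x. \<not> r dvd x) p) + u * r * k"
      using arg_cong[OF p_eq, of sum_mset] by (simp add: mult.assoc)
    moreover have "p \<in> partitions n"
      using \<open>p \<in> O_set u r n\<close> by (simp add: O_set_def)
    ultimately show "split p \<in> ?S"
      using \<open>0 < k\<close> by (auto simp: split_eq[OF filt] indivisible_partitions_def partitions_def)
  qed
  ultimately have "bij_betw join ?S (O_set u r n)"
    by (intro bij_betw_byWitness[where f' = split]) (simp_all add: split_join join_split)
  then have "alpha u r n = card ?S"
    by (simp add: alpha_def bij_betw_same_card)
  also have "\<dots> = (\<Sum>k\<in>?K. card (indivisible_partitions r (n - u * r * k)))"
    using assms by (intro card_SigmaI) (auto intro: finite_subset[OF _ finite_mult_le[of "u * r"]])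
  finally show ?thesis .
qed

lemma add_replicate_mset_in_D_set:
  assumes "0 < u" and "0 < r" and "0 < k" and "u * r * k \<le> n"
    and a: "a \<in> mult_bounded_partitions r (n - u * r * k)"
  shows "a + replicate_mset (r * k) u \<in> D_set u r n"
proof -
  let ?p = "a + replicate_mset (r * k) u"
  have "\<forall>x\<in>#a. 0 < x" and "sum_mset a = n - u * r * k" and a_bounded: "\<forall>x. count a x < r"
    using a by (auto simp: mult_bounded_partitions_def partitions_def)
  then have "?p \<in> partitions n"
    using assms by (auto simp: partitions_def algebra_simps)
  moreover have "{x \<in> set_mset ?p. r \<le> count ?p x} = {u}"
  proof (rule set_eqI)
    fix x
    have "r \<le> r * k"
      using \<open>0 < k\<close> by simp
    moreover have "count ?p u = count a u + r * k"
      by simp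
    ultimately have "r \<le> count ?p u"
      by linarith
    moreover have "count ?p x < r" if "x \<noteq> u"
      using a_bounded that by simp
    ultimately show "x \<in> {x \<in> set_mset ?p. r \<le> count ?p x} \<longleftrightarrow> x \<in> {u}"
      using assms by (cases "x = u") (auto simp flip: count_greater_zero_iff)
  qed
  ultimately show ?thesis
    by (simp add: D_set_def)
qed

lemma D_set_remove_repetitions:
  assumes "0 < r" and p: "p \<in> D_set u r n"
  defines "k \<equiv> count p u div r"
  shows "0 < k" and "u * r * k \<le> n"
    and "p - replicate_mset (r * k) u \<in> mult_bounded_partitions r (n - u * r * k)"
proof -
  have "p \<in> partitions n" and often: "{x \<in> set_mset p. r \<le> count p x} = {u}"
    using p by (auto simp: D_set_def)
  have "r \<le> count p u"
    using often by blast
  then show "0 < k"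
    using assms by (simp add: k_def div_greater_zero_iff)
  define a where "a = p - replicate_mset (r * k) u"
  have "count a x < r" for x
  proof (cases "x = u")
    case True
    then have "count a x = count p u mod r"
      by (simp add: a_def k_def minus_mult_div_eq_mod)
    then show ?thesis
      using assms by simp
  next
    case False
    then have "\<not> (x \<in># p \<and> r \<le> count p x)"
      using often by blast
    then show ?thesis
      using False assms by (auto simp: a_def not_in_iff)
  qed
  moreover have "p = a + replicate_mset (r * k) u"
    by (simp add: a_def k_def multiset_eq_iff mult.commute)
  then have "sum_mset a + u * r * k = n"
    using \<open>p \<in> partitions n\<close> arg_cong[of _ _ sum_mset] by (auto simp: partitions_def ac_simps)
  moreover have "set_mset a \<subseteq> set_mset p"
    by (auto simp: a_def dest: in_diffD)
  ultimately show "u * r * k \<le> n"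
    and "p - replicate_mset (r * k) u \<in> mult_bounded_partitions r (n - u * r * k)"
    using \<open>p \<in> partitions n\<close> by (auto simp: a_def mult_bounded_partitions_def partitions_def)
qed

lemma beta_eq_sum:
  assumes "0 < u" and "0 < r"
  shows "beta u r n = (\<Sum>k | 0 < k \<and> u * r * k \<le> n. card (mult_bounded_partitions r (n - u * r * k)))"
proof -
  let ?K = "{k. 0 < k \<and> u * r * k \<le> n}"
  let ?S = "SIGMA k:?K. mult_bounded_partitions r (n - u * r * k)"
  define join where "join = (\<lambda>(k, a). a + replicate_mset (r * k) u)"
  define split where
    "split p = (count p u div r, p - replicate_mset (r * (count p u div r)) u)" for p
  have split_join: "split (join s) = s" if "s \<in> ?S" for s
  proof -
    obtain k a where s: "s = (k, a)" and "count a u < r"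
      using \<open>s \<in> ?S\<close> by (auto simp: mult_bounded_partitions_def)
    then show ?thesis
      by (simp add: join_def split_def)
  qed
  have join_split: "join (split p) = p" for p
  proof -
    have "r * (count p u div r) \<le> count p u"
      by (simp add: mult.commute)
    then show ?thesis
      by (simp add: join_def split_def multiset_eq_iff)
  qed
  have "join ` ?S \<subseteq> D_set u r n"
    using assms by (auto simp: join_def intro: add_replicate_mset_in_D_set)
  moreover have "split ` D_set u r n \<subseteq> ?S"
  proof (rule image_subsetI)
    fix p assume p: "p \<in> D_set u r n"
    then show "split p \<in> ?S"
      using D_set_remove_repetitions[OF \<open>0 < r\<close> p] by (simp add: split_def)
  qed
  ultimately have "bij_betw join ?S (D_set u r n)"
    by (intro bij_betw_byWitness[where f' = split]) (simp_all add: split_join join_split)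
  then have "beta u r n = card ?S"
    by (simp add: beta_def bij_betw_same_card)
  also have "\<dots> = (\<Sum>k\<in>?K. card (mult_bounded_partitions r (n - u * r * k)))"
    using assms by (intro card_SigmaI) (auto intro: finite_subset[OF _ finite_mult_le[of "u * r"]])
  finally show ?thesis .
qed

theorem theorem1:
  fixes u r n :: nat
  assumes "1 \<le> u" and "2 \<le> r"
  shows "alpha u r n = beta u r n"
proof -
  have "0 < u" and "0 < r"
    using assms by simp_all
  then show ?thesis
    unfolding alpha_eq_sum[OF \<open>0 < u\<close> \<open>0 < r\<close>] beta_eq_sum[OF \<open>0 < u\<close> \<open>0 < r\<close>]
    by (simp only: card_indivisible_partitions_eq_mult_bounded)
qed

end
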